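(* Let $p\in(0,1)$, $\gamma>0$, $B>0$, $w,N\in\mathbb{N}$, and let $(\xi_j^{(N)*})_{j=1}^N$ be the unique maximizer of $\mathcal{T}_N$. Then for every $j\in\{1,\dots,N-1\}$, $$\xi_j^{(N)*}<\frac{B-\sum_{i=1}^{j}\xi_i^{(N)*}}{w}.$$
   Context: Logarithms are base 2. For an admissible (nonnegative, with sum at most $B$) sequence $(x_j)_{j\ge1}$, $$\mathcal{T}_\infty(x_1,x_2,\dots)=\sum_{k=1}^{w}p^2(1-p)^{k-1}\frac{k}{2}\log_2\!\Big(1+\gamma\frac{B}{k}\Big)+\sum_{j=1}^{\infty}p(1-p)^{j+w-1}\frac12\log_2(1+\gamma x_j)+\sum_{k=1}^{\infty}p^2(1-p)^{k+w-1}\frac{w}{2}\log_2\!\Big(1+\gamma\frac{B-\sum_{j=1}^{k}x_j}{w}\Big).$$ For $N\in\mathbb{N}$ and $\xi_1,\dots,\xi_N\ge0$ with $\sum_{j=1}^N\xi_j\le B$, define $\mathcal{T}_N(\xi_1,\dots,\xi_N)=\mathcal{T}_\infty(\xi_1,\dots,\xi_N,0,0,\dots)$. $\mathcal{T}_N$ has a unique maximizer over this compact set, denoted $(\xi_j^{(N)*})_{j=1}^N$. *)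

theory Defs
  imports "HOL-Analysis.Analysis"
begin

text \<open>Sequences are functions nat => real indexed from 1 (value at 0 is ignored).\<close>

definition T_inf :: "real \<Rightarrow> real \<Rightarrow> real \<Rightarrow> nat \<Rightarrow> (nat \<Rightarrow> real) \<Rightarrow> real" where
  "T_inf p \<gamma> B w x =
     (\<Sum>k=1..w. p^2 * (1-p)^(k-1) * (real k / 2) * log 2 (1 + \<gamma> * (B / real k)))
   + (\<Sum>j. p * (1-p)^(Suc j + w - 1) * (1/2) * log 2 (1 + \<gamma> * x (Suc j)))
   + (\<Sum>k. p^2 * (1-p)^(Suc k + w - 1) * (real w / 2)
          * log 2 (1 + \<gamma> * ((B - (\<Sum>i=1..Suc k. x i)) / real w)))"

definition T_N :: "real \<Rightarrow> real \<Rightarrow> real \<Rightarrow> nat \<Rightarrow> nat \<Rightarrow> (nat \<Rightarrow> real) \<Rightarrow> real" where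
  "T_N p \<gamma> B w N \<xi> = T_inf p \<gamma> B w (\<lambda>j. if j \<in> {1..N} then \<xi> j else 0)"

definition admissible_N :: "real \<Rightarrow> nat \<Rightarrow> (nat \<Rightarrow> real) \<Rightarrow> bool" where
  "admissible_N B N \<xi> \<longleftrightarrow> (\<forall>j\<in>{1..N}. 0 \<le> \<xi> j) \<and> (\<Sum>j=1..N. \<xi> j) \<le> B"

end

theory Submission
  imports Defs
begin

text \<open>Once the geometric tail of the third series is summed, \<open>T_N\<close> is a finite sum of
  logarithms of the slot values \<open>x\<^sub>k\<close> and of the residuals \<open>u\<^sub>k = (B - S\<^sub>k)/w\<close>.
  If \<open>x\<^sub>j \<ge> u\<^sub>j\<close> for some \<open>j < N\<close>, a first-order perturbation strictly increases it.
  If some later slot carries mass, lowering \<open>x\<^sub>j\<close> loses \<open>weight j / (1 + \<gamma> x\<^sub>j)\<close> but gains at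
  least as much through the residuals \<open>u\<^sub>k \<le> u\<^sub>j \<le> x\<^sub>j\<close>, \<open>k \<ge> j\<close>, whose weights add up to
  \<open>weight j\<close>, and strictly more at \<open>u\<^sub>N < u\<^sub>j\<close>.  Otherwise the last nonzero slot \<open>m\<close> also
  satisfies \<open>x\<^sub>m \<ge> u\<^sub>m\<close>, and moving mass from slot \<open>m\<close> to the empty slot \<open>m + 1\<close> gains
  \<open>weight m\<close> times \<open>(1 - p)(1 - 1/(1 + \<gamma> x\<^sub>m)) > 0\<close> to first order.\<close>

lemma log_affine_has_derivative_at_0:
  fixes a b c :: real
  assumes "0 < 1 + c * a"
  shows "((\<lambda>e. log 2 (1 + c * (a + e * b))) has_real_derivative c * b / (ln 2 * (1 + c * a))) (at 0)"
  using assms by (auto intro!: derivative_eq_intros simp: field_simps)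

lemma max_at_0_derivative_nonpos:
  fixes f :: "real \<Rightarrow> real"
  assumes "(f has_real_derivative D) (at 0)" and "0 < \<delta>"
    and "\<And>e. 0 < e \<Longrightarrow> e \<le> \<delta> \<Longrightarrow> f e \<le> f 0"
  shows "D \<le> 0"
proof (rule ccontr)
  assume "\<not> D \<le> 0"
  then obtain d where "0 < d" and inc: "\<And>h. 0 < h \<Longrightarrow> h < d \<Longrightarrow> f 0 < f (0 + h)"
    using DERIV_pos_inc_right[OF assms(1)] by force
  then have "f 0 < f (min \<delta> (d/2))"
    using \<open>0 < \<delta>\<close> by simp
  with assms(3)[of "min \<delta> (d/2)"] \<open>0 < \<delta>\<close> \<open>0 < d\<close> show False by simp
qed

locale T_N_problem =
  fixes p \<gamma> B :: real and w N :: nat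
  assumes p: "0 < p" "p < 1" and \<gamma>: "0 < \<gamma>" and B: "0 < B" and w: "1 \<le> w" and N: "1 \<le> N"
begin

definition weight :: "nat \<Rightarrow> real" where
  "weight k = p * (1-p)^(k+w-1) / 2"

text \<open>The coefficient of the \<open>k\<close>-th residual term in the finite form; for \<open>k = N\<close> it collects
  the geometric tail \<open>\<Sum>\<^sub>k\<^sub>\<ge>\<^sub>N p\<^sup>2 (1-p)\<^bsup>k+w-1\<^esup> = p (1-p)\<^bsup>N+w-1\<^esup>\<close> of the third series of \<open>T_inf\<close>,
  all of whose terms see the same residual.\<close>

definition residual_weight :: "nat \<Rightarrow> real" where
  "residual_weight k = (if k < N then p * weight k else weight k)"

definition residual :: "(nat \<Rightarrow> real) \<Rightarrow> nat \<Rightarrow> real" where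
  "residual x k = (B - (\<Sum>i=1..k. x i)) / real w"

definition T_fin :: "(nat \<Rightarrow> real) \<Rightarrow> real" where
  "T_fin x =
     (\<Sum>k=1..w. p^2 * (1-p)^(k-1) * (real k / 2) * log 2 (1 + \<gamma> * (B / real k)))
   + (\<Sum>k=1..N. weight k * log 2 (1 + \<gamma> * x k))
   + (\<Sum>k=1..N. real w * residual_weight k * log 2 (1 + \<gamma> * residual x k))"

definition slope :: "(nat \<Rightarrow> real) \<Rightarrow> (nat \<Rightarrow> real) \<Rightarrow> real" where
  "slope x d = (\<Sum>k=1..N. weight k * d k / (1 + \<gamma> * x k))
     - (\<Sum>k=1..N. residual_weight k * (\<Sum>i=1..k. d i) / (1 + \<gamma> * residual x k))"

lemma weight_pos: "0 < weight k"
  using p by (simp add: weight_def)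

lemma weight_Suc: "weight (Suc k) = (1-p) * weight k"
proof -
  have "Suc k + w - 1 = Suc (k + w - 1)" using w by simp
  then show ?thesis unfolding weight_def by (simp only: power_Suc) simp
qed

lemma residual_weight_tail_sum:
  assumes "j \<le> N"
  shows "(\<Sum>k=j..N. residual_weight k) = weight j"
  using assms
proof (induction j rule: inc_induct)
  case base
  then show ?case by (simp add: residual_weight_def)
next
  case (step k)
  then have "{k..N} = insert k {Suc k..N}" by auto
  with step show ?case by (simp add: residual_weight_def weight_Suc algebra_simps)
qed

lemma weight_add: "weight (k + n) = (1-p)^n * weight k"
  by (induction n) (simp_all add: weight_Suc)

lemma residual_restrict:
  "residual (\<lambda>j. if j \<in> {1..N} then x j else 0) k = residual x (min k N)"
proof -
  have "(\<Sum>i=1..k. if i \<in> {1..N} then x i else 0) = (\<Sum>i\<in>{1..k} \<inter> {1..N}. x i)"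
    by (rule sum.inter_restrict[symmetric]) simp
  also have "{1..k} \<inter> {1..N} = {1..min k N}" by auto
  finally show ?thesis by (simp add: residual_def)
qed

lemma T_N_eq_T_fin: "T_N p \<gamma> B w N x = T_fin x"
proof -
  define x' where "x' j = (if j \<in> {1..N} then x j else 0)" for j
  define f where "f j = weight (Suc j) * log 2 (1 + \<gamma> * x' (Suc j))" for j
  define L where "L k = log 2 (1 + \<gamma> * residual x k)" for k
  define g where "g k = real w * p * weight (Suc k) * L (min (Suc k) N)" for k
  define G where "G k = real w * residual_weight k * L k" for k
  have "(\<Sum>j. f j) = (\<Sum>j<N. f j)"
    by (rule suminf_finite) (auto simp: f_def x'_def)
  also have "\<dots> = (\<Sum>k=1..N. weight k * log 2 (1 + \<gamma> * x k))"
    by (simp add: sum.atLeast1_atMost_eq f_def x'_def)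
  finally have f_sum: "(\<Sum>j. f j) = (\<Sum>k=1..N. weight k * log 2 (1 + \<gamma> * x k))" .
  have g_tail: "g (k + (N-1)) = (real w * p * weight N * L N) * (1-p)^k" for k
    using N weight_add[of N k] by (simp add: g_def add.commute)
  have "(\<lambda>k. (real w * p * weight N * L N) * (1-p)^k) sums ((real w * p * weight N * L N) * (1 / (1 - (1-p))))"
    by (intro sums_mult geometric_sums) (use p in auto)
  then have "(\<lambda>k. g (k + (N-1))) sums G N"
    unfolding g_tail using p by (simp add: G_def residual_weight_def mult.assoc)
  then have "g sums (G N + (\<Sum>k<N-1. g k))"
    by (simp add: sums_iff_shift)
  moreover have "(\<Sum>k<N-1. g k) = (\<Sum>k=1..N-1. G k)"
    unfolding sum.atLeast1_atMost_eq One_nat_def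
    by (intro sum.cong) (auto simp: g_def G_def residual_weight_def)
  moreover have "(\<Sum>k=1..N. G k) = (\<Sum>k=1..N-1. G k) + G N"
    using N by (cases N) (simp_all add: sum.cl_ivl_Suc)
  ultimately have g_sum: "(\<Sum>k. g k) = (\<Sum>k=1..N. G k)"
    by (simp add: sums_iff)
  have f_eq: "(\<lambda>j. p * (1-p)^(Suc j + w - 1) * (1/2) * log 2 (1 + \<gamma> * x' (Suc j))) = f"
    by (auto simp: f_def weight_def)
  have g_eq: "(\<lambda>k. p^2 * (1-p)^(Suc k + w - 1) * (real w / 2)
      * log 2 (1 + \<gamma> * ((B - (\<Sum>i=1..Suc k. x' i)) / real w))) = g"
  proof
    fix k
    have "(B - (\<Sum>i=1..Suc k. x' i)) / real w = residual x (min (Suc k) N)"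
      using residual_restrict[of x "Suc k"] unfolding x'_def residual_def .
    then show "p^2 * (1-p)^(Suc k + w - 1) * (real w / 2)
      * log 2 (1 + \<gamma> * ((B - (\<Sum>i=1..Suc k. x' i)) / real w)) = g k"
      by (simp add: g_def L_def weight_def power2_eq_square)
  qed
  show ?thesis
    unfolding T_N_def T_inf_def T_fin_def x'_def[symmetric] f_eq g_eq f_sum g_sum
    by (simp add: G_def L_def)
qed

lemma residual_split:
  assumes "j \<le> k"
  shows "residual x j = residual x k + (\<Sum>i=Suc j..k. x i) / real w"
proof -
  have "(\<Sum>i=1..k. x i) = (\<Sum>i=1..j. x i) + (\<Sum>i=Suc j..k. x i)"
    using sum.ub_add_nat[of 1 j x "k - j"] assms by simp
  then show ?thesis
    by (simp add: residual_def add_divide_distrib diff_divide_distrib)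
qed

lemma residual_antimono:
  assumes "admissible_N B N x" "j \<le> k" "k \<le> N"
  shows "residual x k \<le> residual x j"
proof -
  have "0 \<le> (\<Sum>i=Suc j..k. x i)"
    using assms by (intro sum_nonneg) (auto simp: admissible_N_def)
  then show ?thesis
    using residual_split[OF assms(2)] by simp
qed

lemma residual_nonneg:
  assumes "admissible_N B N x" "k \<le> N"
  shows "0 \<le> residual x k"
proof -
  have "0 \<le> residual x N"
    using assms by (simp add: admissible_N_def residual_def)
  with residual_antimono[OF assms order.refl] show ?thesis by simp
qed

lemma residual_strict_antimono:
  assumes "admissible_N B N x" "j < k0" "k0 \<le> N" "0 < x k0"
  shows "residual x N < residual x j"
proof -
  have "x k0 \<le> (\<Sum>i=Suc j..N. x i)"
    using assms by (intro member_le_sum) (auto simp: admissible_N_def)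
  then have "0 < (\<Sum>i=Suc j..N. x i) / real w"
    using assms w by simp
  then show ?thesis
    using residual_split[of j N x] assms by simp
qed

lemma T_fin_line_has_derivative:
  assumes "admissible_N B N x"
  shows "((\<lambda>e. T_fin (\<lambda>i. x i + e * d i)) has_real_derivative \<gamma> / ln 2 * slope x d) (at 0)"
proof -
  have x_pos: "0 < 1 + \<gamma> * x k" if "k \<in> {1..N}" for k
    using assms that \<gamma> by (simp add: admissible_N_def add_pos_nonneg)
  have u_pos: "0 < 1 + \<gamma> * residual x k" if "k \<in> {1..N}" for k
    using residual_nonneg[OF assms] that \<gamma> by (simp add: add_pos_nonneg)
  have line: "residual (\<lambda>i. x i + e * d i) k = residual x k + e * (- (\<Sum>i=1..k. d i) / real w)" for e k
    by (simp add: residual_def sum.distrib sum_distrib_left[symmetric] add_divide_distrib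
        diff_divide_distrib)
  have "((\<lambda>e. T_fin (\<lambda>i. x i + e * d i)) has_real_derivative
      0 + (\<Sum>k=1..N. weight k * (\<gamma> * d k / (ln 2 * (1 + \<gamma> * x k))))
        + (\<Sum>k=1..N. real w * residual_weight k *
             (\<gamma> * (- (\<Sum>i=1..k. d i) / real w) / (ln 2 * (1 + \<gamma> * residual x k))))) (at 0)"
    unfolding T_fin_def line
    by (intro DERIV_add DERIV_const DERIV_sum DERIV_cmult log_affine_has_derivative_at_0 x_pos u_pos)
  moreover have "\<gamma> / ln 2 * slope x d = (\<Sum>k=1..N. weight k * (\<gamma> * d k / (ln 2 * (1 + \<gamma> * x k))))
        + (\<Sum>k=1..N. real w * residual_weight k *
             (\<gamma> * (- (\<Sum>i=1..k. d i) / real w) / (ln 2 * (1 + \<gamma> * residual x k))))"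
  proof -
    have "(\<Sum>k=1..N. weight k * (\<gamma> * d k / (ln 2 * (1 + \<gamma> * x k))))
        = \<gamma> / ln 2 * (\<Sum>k=1..N. weight k * d k / (1 + \<gamma> * x k))"
      unfolding sum_distrib_left by (intro sum.cong refl) (simp add: field_simps)
    moreover have "(\<Sum>k=1..N. real w * residual_weight k *
             (\<gamma> * (- (\<Sum>i=1..k. d i) / real w) / (ln 2 * (1 + \<gamma> * residual x k))))
        = - (\<gamma> / ln 2 * (\<Sum>k=1..N. residual_weight k * (\<Sum>i=1..k. d i) / (1 + \<gamma> * residual x k)))"
    proof -
      have summand: "real w * r * (\<gamma> * (- D / real w) / (ln 2 * U)) = - (\<gamma> / ln 2 * (r * D / U))"
        for r D U :: real
        using w by (cases "U = 0") (simp_all add: field_simps)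
      show ?thesis
        by (simp only: summand sum_negf sum_distrib_left[symmetric])
    qed
    ultimately show ?thesis
      by (simp add: slope_def right_diff_distrib)
  qed
  ultimately show ?thesis by simp
qed

lemma slope_nonpos_at_maximizer:
  assumes adm: "admissible_N B N \<xi>"
    and max: "\<forall>\<eta>. admissible_N B N \<eta> \<longrightarrow> T_N p \<gamma> B w N \<eta> \<le> T_N p \<gamma> B w N \<xi>"
    and "0 < \<delta>" and dir: "\<And>e. 0 < e \<Longrightarrow> e \<le> \<delta> \<Longrightarrow> admissible_N B N (\<lambda>i. \<xi> i + e * d i)"
  shows "slope \<xi> d \<le> 0"
proof -
  have "\<gamma> / ln 2 * slope \<xi> d \<le> 0"
  proof (rule max_at_0_derivative_nonpos[OF T_fin_line_has_derivative[OF adm] \<open>0 < \<delta>\<close>])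
    fix e :: real
    assume "0 < e" "e \<le> \<delta>"
    then show "T_fin (\<lambda>i. \<xi> i + e * d i) \<le> T_fin (\<lambda>i. \<xi> i + 0 * d i)"
      using max dir by (simp flip: T_N_eq_T_fin)
  qed
  moreover have "0 < \<gamma> / ln 2"
    using \<gamma> by simp
  ultimately show ?thesis
    by (metis mult_le_cancel_left_pos mult_zero_right)
qed

lemma residual_weight_pos: "0 < residual_weight k"
  using p weight_pos[of k] by (simp add: residual_weight_def)

lemma admissible_decrease:
  assumes "admissible_N B N x" "0 \<le> e" "e \<le> x j"
  shows "admissible_N B N (\<lambda>i. x i + e * (if i = j then -1 else 0))"
proof -
  have "(\<Sum>i=1..N. x i + e * (if i = j then -1 else 0)) \<le> (\<Sum>i=1..N. x i)"
    using assms(2) by (intro sum_mono) auto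
  then show ?thesis
    using assms by (auto simp: admissible_N_def)
qed

lemma admissible_shift:
  assumes "admissible_N B N x" "1 \<le> m" "m < N" "0 \<le> e" "e \<le> x m"
  shows "admissible_N B N (\<lambda>i. x i + e * ((if i = Suc m then 1 else 0) - (if i = m then 1 else 0)))"
proof -
  have "(\<Sum>i=1..N. x i + e * ((if i = Suc m then 1 else 0) - (if i = m then 1 else 0)))
      = (\<Sum>i=1..N. x i)"
    using assms(2,3) by (simp add: sum.distrib sum_distrib_left[symmetric] sum_subtractf)
  then show ?thesis
    using assms by (auto simp: admissible_N_def)
qed

lemma slope_decrease_pos:
  assumes adm: "admissible_N B N x" and j: "1 \<le> j" "j \<le> N"
    and over: "residual x j \<le> x j" and strict: "residual x N < residual x j"
  shows "0 < slope x (\<lambda>i. if i = j then -1 else 0)"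
proof -
  define X where "X = 1 + \<gamma> * x j"
  define U where "U k = 1 + \<gamma> * residual x k" for k
  have U_pos: "0 < U k" if "k \<le> N" for k
    using residual_nonneg[OF adm that] \<gamma> by (simp add: U_def add_pos_nonneg)
  have U_le: "U k \<le> X" if "j \<le> k" "k \<le> N" for k
    using residual_antimono[OF adm that] over \<gamma> by (simp add: U_def X_def)
  have U_lt: "U N < X"
    using strict over \<gamma> by (simp add: U_def X_def)
  have "weight j / X = (\<Sum>k=j..N. residual_weight k / X)"
    unfolding sum_divide_distrib[symmetric] residual_weight_tail_sum[OF j(2)] ..
  also have "\<dots> < (\<Sum>k=j..N. residual_weight k / U k)"
  proof (rule sum_strict_mono_ex1)
    show "\<forall>k\<in>{j..N}. residual_weight k / X \<le> residual_weight k / U k"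
    proof
      fix k
      assume "k \<in> {j..N}"
      then have "U k \<le> X" "0 < U k"
        using U_le U_pos by auto
      then show "residual_weight k / X \<le> residual_weight k / U k"
        using residual_weight_pos[of k] by (intro divide_left_mono) auto
    qed
    show "\<exists>k\<in>{j..N}. residual_weight k / X < residual_weight k / U k"
      using U_lt U_pos[of N] residual_weight_pos j by (auto intro!: bexI[of _ N] divide_strict_left_mono)
  qed simp
  also have "\<dots> = - (\<Sum>k=1..N. residual_weight k * (\<Sum>i=1..k. if i = j then -1 else 0) / U k)"
  proof -
    have "(\<Sum>i=1..k. if i = j then -1 else 0) = (if j \<le> k then -1 else (0::real))" for k
      using j by simp
    then have "(\<Sum>k=1..N. residual_weight k * (\<Sum>i=1..k. if i = j then -1 else 0) / U k)
        = (\<Sum>k=1..N. if k \<in> {j..} then - (residual_weight k / U k) else 0)"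
      by (intro sum.cong) auto
    also have "\<dots> = - (\<Sum>k=j..N. residual_weight k / U k)"
    proof -
      show ?thesis
        using j sum.inter_restrict[of "{1..N}" "\<lambda>k. - (residual_weight k / U k)" "{j..}"]
        by (simp add: sum_negf max_def)
    qed
    finally show ?thesis by simp
  qed
  moreover have "(\<Sum>k=1..N. weight k * (if k = j then -1 else 0) / (1 + \<gamma> * x k))
      = (\<Sum>k=1..N. if k = j then - (weight j / X) else 0)"
    by (intro sum.cong) (auto simp: X_def)
  moreover have "\<dots> = - (weight j / X)"
    using j by simp
  ultimately show ?thesis
    by (simp add: slope_def U_def)
qed

lemma slope_shift_pos:
  assumes adm: "admissible_N B N x" and m: "1 \<le> m" "m < N"
    and pos: "0 < x m" and next_zero: "x (Suc m) = 0" and over: "residual x m \<le> x m"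
  shows "0 < slope x (\<lambda>i. (if i = Suc m then 1 else 0) - (if i = m then 1 else 0))"
proof -
  define Y where "Y = 1 + \<gamma> * x m"
  define Z where "Z = 1 + \<gamma> * residual x m"
  have "1 < Y"
    using pos \<gamma> by (simp add: Y_def)
  have "0 < Z"
    using residual_nonneg[OF adm] m \<gamma> by (simp add: Z_def add_pos_nonneg)
  have "Z \<le> Y"
    using over \<gamma> by (simp add: Z_def Y_def)
  have gain: "(\<Sum>k=1..N. weight k * ((if k = Suc m then 1 else 0) - (if k = m then 1 else 0))
      / (1 + \<gamma> * x k)) = (1-p) * weight m - weight m / Y"
  proof -
    have "(\<Sum>k=1..N. weight k * ((if k = Suc m then 1 else 0) - (if k = m then 1 else 0))
        / (1 + \<gamma> * x k))
      = (\<Sum>k=1..N. (if k = Suc m then weight (Suc m) else 0) - (if k = m then weight m / Y else 0))"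
      by (intro sum.cong) (auto simp: Y_def next_zero)
    also have "\<dots> = weight (Suc m) - weight m / Y"
      using m by (simp add: sum_subtractf)
    finally show ?thesis
      by (simp add: weight_Suc)
  qed
  have loss: "(\<Sum>k=1..N. residual_weight k
      * (\<Sum>i=1..k. (if i = Suc m then 1 else 0) - (if i = m then 1 else 0)) / (1 + \<gamma> * residual x k))
      = - (p * weight m / Z)"
  proof -
    have "(\<Sum>i=1..k. (if i = Suc m then 1 else 0) - (if i = m then 1 else (0::real)))
        = (if k = m then -1 else 0)" for k
      using m by (auto simp: sum_subtractf)
    then have "(\<Sum>k=1..N. residual_weight k
      * (\<Sum>i=1..k. (if i = Suc m then 1 else 0) - (if i = m then 1 else 0)) / (1 + \<gamma> * residual x k))
        = (\<Sum>k=1..N. if k = m then - (residual_weight m / Z) else 0)"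
      by (intro sum.cong) (auto simp: Z_def)
    also have "\<dots> = - (p * weight m / Z)"
      using m by (simp add: residual_weight_def)
    finally show ?thesis .
  qed
  have "p * weight m / Y \<le> p * weight m / Z"
    using \<open>0 < Z\<close> \<open>Z \<le> Y\<close> weight_pos[of m] p by (intro divide_left_mono) auto
  moreover have "(1-p) * weight m - weight m / Y + p * weight m / Y = (1-p) * weight m * (1 - 1 / Y)"
    using \<open>1 < Y\<close> by (simp add: field_simps)
  moreover have "0 < (1-p) * weight m * (1 - 1 / Y)"
    using p weight_pos[of m] \<open>1 < Y\<close> by simp
  ultimately show ?thesis
    unfolding slope_def gain loss by linarith
qed

lemma maximizer_below_residual_if_mass_after:
  assumes adm: "admissible_N B N \<xi>"
    and max: "\<forall>\<eta>. admissible_N B N \<eta> \<longrightarrow> T_N p \<gamma> B w N \<eta> \<le> T_N p \<gamma> B w N \<xi>"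
    and j: "1 \<le> j" "j < k0" "k0 \<le> N" and "0 < \<xi> k0"
  shows "\<xi> j < residual \<xi> j"
proof (rule ccontr)
  assume "\<not> \<xi> j < residual \<xi> j"
  then have over: "residual \<xi> j \<le> \<xi> j" by simp
  have strict: "residual \<xi> N < residual \<xi> j"
    using residual_strict_antimono[OF adm] assms by blast
  then have "0 < \<xi> j"
    using residual_nonneg[OF adm order.refl] over by linarith
  then have "slope \<xi> (\<lambda>i. if i = j then -1 else 0) \<le> 0"
    by (rule slope_nonpos_at_maximizer[OF adm max]) (simp add: admissible_decrease[OF adm])
  moreover have "0 < slope \<xi> (\<lambda>i. if i = j then -1 else 0)"
    using j by (intro slope_decrease_pos[OF adm _ _ over strict]) auto
  ultimately show False by simp
qed

lemma maximizer_below_residual_if_gap_after: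
  assumes adm: "admissible_N B N \<xi>"
    and max: "\<forall>\<eta>. admissible_N B N \<eta> \<longrightarrow> T_N p \<gamma> B w N \<eta> \<le> T_N p \<gamma> B w N \<xi>"
    and m: "1 \<le> m" "m < N" and pos: "0 < \<xi> m" and next_zero: "\<xi> (Suc m) = 0"
  shows "\<xi> m < residual \<xi> m"
proof (rule ccontr)
  assume "\<not> \<xi> m < residual \<xi> m"
  then have over: "residual \<xi> m \<le> \<xi> m" by simp
  have "slope \<xi> (\<lambda>i. (if i = Suc m then 1 else 0) - (if i = m then 1 else 0)) \<le> 0"
    using pos by (rule slope_nonpos_at_maximizer[OF adm max]) (simp add: admissible_shift[OF adm m])
  moreover have "0 < slope \<xi> (\<lambda>i. (if i = Suc m then 1 else 0) - (if i = m then 1 else 0))"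
    by (rule slope_shift_pos[OF adm m pos next_zero over])
  ultimately show False by simp
qed

theorem maximizer_below_residual:
  assumes adm: "admissible_N B N \<xi>"
    and max: "\<forall>\<eta>. admissible_N B N \<eta> \<longrightarrow> T_N p \<gamma> B w N \<eta> \<le> T_N p \<gamma> B w N \<xi>"
    and j: "1 \<le> j" "j < N"
  shows "\<xi> j < residual \<xi> j"
proof (rule ccontr)
  assume "\<not> \<xi> j < residual \<xi> j"
  then have over: "residual \<xi> j \<le> \<xi> j" by simp
  have nonneg: "0 \<le> \<xi> i" if "i \<in> {1..N}" for i
    using adm that by (simp add: admissible_N_def)
  define P where "P = {i \<in> {1..N}. 0 < \<xi> i}"
  have "P \<noteq> {}"
  proof
    assume "P = {}"
    then have zero: "\<xi> i = 0" if "i \<in> {1..N}" for i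
      using nonneg[OF that] that by (force simp: P_def)
    then have "residual \<xi> j = B / real w" "\<xi> j = 0"
      using j by (simp_all add: residual_def)
    then show False
      using over B w by (simp add: divide_le_0_iff)
  qed
  define m where "m = Max P"
  have "finite P"
    by (simp add: P_def)
  have "m \<in> P"
    unfolding m_def using \<open>finite P\<close> \<open>P \<noteq> {}\<close> by (rule Max_in)
  then have m: "1 \<le> m" "m \<le> N" "0 < \<xi> m"
    by (auto simp: P_def)
  have after_m: "\<xi> i = 0" if "m < i" "i \<le> N" for i
  proof -
    have "i \<notin> P"
      using that Max_ge[OF \<open>finite P\<close>, of i] by (force simp: m_def)
    then show ?thesis
      using nonneg[of i] that m by (force simp: P_def)
  qed
  show False
  proof (cases "j < m")
    case True
    then show False
      using maximizer_below_residual_if_mass_after[OF adm max \<open>1 \<le> j\<close> True] m over by simp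
  next
    case False
    have "(\<Sum>i=Suc m..j. \<xi> i) = 0"
      using after_m j by (intro sum.neutral) auto
    moreover have "\<xi> j \<le> \<xi> m"
      using False after_m[of j] j m by (cases "j = m") auto
    ultimately have "residual \<xi> j \<le> \<xi> m" "residual \<xi> m = residual \<xi> j"
      using over residual_split[of m j \<xi>] False by simp_all
    moreover have "\<xi> m < residual \<xi> m"
      using j False m after_m
      by (intro maximizer_below_residual_if_gap_after[OF adm max]) auto
    ultimately show False by simp
  qed
qed

end

theorem lemma4:
  fixes p \<gamma> B :: real and w N :: nat and \<xi> :: "nat \<Rightarrow> real"
  assumes "0 < p" "p < 1" "0 < \<gamma>" "0 < B" "1 \<le> w" "1 \<le> N"
    and "admissible_N B N \<xi>"
    and "\<forall>\<eta>. admissible_N B N \<eta> \<longrightarrow> T_N p \<gamma> B w N \<eta> \<le> T_N p \<gamma> B w N \<xi>"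
  shows "\<forall>j\<in>{1..<N}. \<xi> j < (B - (\<Sum>i=1..j. \<xi> i)) / real w"
proof -
  interpret T_N_problem p \<gamma> B w N
    using assms(1-6) by unfold_locales
  show ?thesis
    using maximizer_below_residual[OF assms(7,8)] by (auto simp: residual_def)
qed

end
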